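(* Let $\mathbb F=\mathbb R$ or $\mathbb C$, $G$ an algebraic group over $\mathbb F$ and $\rho:G\to\mathrm{GL}(V)$ a rational representation on an $n$-dimensional space with $\rho(G)\subseteq\mathrm{SL}(V)$, and $0<k<n$. Let $U\subseteq V\otimes\mathbb F^k$ and $\pi_{k,V}$ be as below. Then for every $T\in U$ there is an isomorphism of algebraic groups $\mathrm{Stab}_G(\pi_{k,V}(T))\cong\mathrm{Stab}_{G\times\mathrm{SL}_k}(T)$.
   Context: $U=\{\sum_{i=1}^kv_i\otimes e_i: v_1,\dots,v_k\in V\text{ linearly independent}\}$, $e_i$ the standard basis of $\mathbb F^k$; $\pi_{k,V}(\sum_iv_i\otimes e_i)=v_1\wedge\cdots\wedge v_k\in\bigwedge^kV$. $G$ acts on $\bigwedge^kV$ via $\rho$, and $G\times\mathrm{SL}_k$ acts on $V\otimes\mathbb F^k$ by $(g,A)\cdot(v\otimes w)=\rho(g)v\otimes Aw$. *)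

theory Defs
  imports "HOL-Analysis.Analysis"
begin

inductive_set polys :: "('x \<Rightarrow> 'a::comm_ring_1) set \<Rightarrow> ('x \<Rightarrow> 'a) set"
  for C :: "('x \<Rightarrow> 'a) set" where
  const: "(\<lambda>x. c) \<in> polys C"
| coord: "f \<in> C \<Longrightarrow> f \<in> polys C"
| add: "f \<in> polys C \<Longrightarrow> g \<in> polys C \<Longrightarrow> (\<lambda>x. f x + g x) \<in> polys C"
| mult: "f \<in> polys C \<Longrightarrow> g \<in> polys C \<Longrightarrow> (\<lambda>x. f x * g x) \<in> polys C"

text \<open>Coordinate ring of GL_m: the matrix entries and the inverse of the determinant.\<close>
definition mat_coords :: "('a::field ^'m^'m \<Rightarrow> 'a) set" where
  "mat_coords = {(\<lambda>M. M $ i $ j) | i j. True} \<union> {(\<lambda>M. inverse (det M))}"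

definition prod_coords :: "('x \<Rightarrow> 'a) set \<Rightarrow> ('y \<Rightarrow> 'a) set \<Rightarrow> ('x \<times> 'y \<Rightarrow> 'a) set" where
  "prod_coords CX CY = (\<lambda>c. c \<circ> fst) ` CX \<union> (\<lambda>c. c \<circ> snd) ` CY"

definition regular_map :: "('x \<Rightarrow> 'a::comm_ring_1) set \<Rightarrow> ('y \<Rightarrow> 'a) set \<Rightarrow> 'x set \<Rightarrow> ('x \<Rightarrow> 'y) \<Rightarrow> bool" where
  "regular_map CX CY X f \<longleftrightarrow> (\<forall>c\<in>CY. \<exists>p\<in>polys CX. \<forall>x\<in>X. c (f x) = p x)"

definition lin_alg_group :: "('a::field ^'m^'m) set \<Rightarrow> bool" where
  "lin_alg_group G \<longleftrightarrow>
     (\<exists>P \<subseteq> polys mat_coords. G = {M. invertible M \<and> (\<forall>p\<in>P. p M = 0)}) \<and>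
     mat 1 \<in> G \<and> (\<forall>g\<in>G. \<forall>h\<in>G. g ** h \<in> G) \<and> (\<forall>g\<in>G. \<exists>h\<in>G. g ** h = mat 1)"

definition rational_rep :: "('a::field ^'m^'m) set \<Rightarrow> ('a^'m^'m \<Rightarrow> 'a^'n^'n) \<Rightarrow> bool" where
  "rational_rep G \<rho> \<longleftrightarrow>
     (\<forall>g\<in>G. invertible (\<rho> g)) \<and>
     (\<forall>g\<in>G. \<forall>h\<in>G. \<rho> (g ** h) = \<rho> g ** \<rho> h) \<and>
     regular_map mat_coords mat_coords G \<rho>"

definition alg_group_iso ::
  "('x \<Rightarrow> 'a::comm_ring_1) set \<Rightarrow> ('y \<Rightarrow> 'a) set \<Rightarrow> ('x \<Rightarrow> 'x \<Rightarrow> 'x) \<Rightarrow> ('y \<Rightarrow> 'y \<Rightarrow> 'y)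
     \<Rightarrow> 'x set \<Rightarrow> 'y set \<Rightarrow> bool" where
  "alg_group_iso CX CY mx my X Y \<longleftrightarrow>
     (\<exists>\<phi>. bij_betw \<phi> X Y \<and> (\<forall>x\<in>X. \<forall>y\<in>X. \<phi> (mx x y) = my (\<phi> x) (\<phi> y)) \<and>
          regular_map CX CY X \<phi> \<and> regular_map CY CX Y (the_inv_into X \<phi>))"

text \<open>Elements of V \<otimes> F^k are represented as n\<times>k matrices; v \<otimes> w is the matrix v w^T.\<close>
definition tensor :: "'a::comm_ring_1 ^'n \<Rightarrow> 'a^'k \<Rightarrow> 'a^'k^'n" where
  "tensor v w = (\<chi> i j. v $ i * w $ j)"

text \<open>Action of (g,A) on V \<otimes> F^k: the linear map with v \<otimes> w \<mapsto> \<rho>(g) v \<otimes> A w, i.e. T \<mapsto> \<rho>(g) T A^T.\<close>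
definition tensor_act :: "'a::comm_ring_1 ^'n^'n \<Rightarrow> 'a^'k^'k \<Rightarrow> 'a^'k^'n \<Rightarrow> 'a^'k^'n" where
  "tensor_act M A T = M ** T ** transpose A"

definition U_set :: "('a::field ^'k^'n) set" where
  "U_set = {(\<Sum>i\<in>UNIV. tensor (v i) (axis i 1)) | v.
              \<forall>c::'k \<Rightarrow> 'a. (\<Sum>i\<in>UNIV. c i *s v i) = 0 \<longrightarrow> (\<forall>i. c i = 0)}"

text \<open>\<Lambda>^k V realised as alternating k-linear forms on V^*, i.e. functions on index maps 'k \<Rightarrow> 'n:
  (v_1 \<and> ... \<and> v_k)(f) = det [v_j(f i)].  pi_kV (sum v_i \<otimes> e_i) = v_1 \<and> ... \<and> v_k.\<close>
definition pi_kV :: "'a::comm_ring_1 ^'k^'n \<Rightarrow> (('k \<Rightarrow> 'n) \<Rightarrow> 'a)" where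
  "pi_kV T = (\<lambda>f. det (\<chi> i j. T $ (f i) $ j))"

text \<open>Induced action of M \<in> GL(V) on \<Lambda>^k V \<subseteq> V^{\<otimes>k}.\<close>
definition ext_act :: "'a::comm_ring_1 ^'n^'n \<Rightarrow> (('k \<Rightarrow> 'n) \<Rightarrow> 'a) \<Rightarrow> (('k \<Rightarrow> 'n) \<Rightarrow> 'a)" where
  "ext_act M \<omega> = (\<lambda>f. \<Sum>h\<in>UNIV. (\<Prod>i\<in>UNIV. M $ (f i) $ (h i)) * \<omega> h)"

end

theory Submission
  imports Defs
begin

text \<open>Regard T as an n \<times> k matrix of rank k, with a left inverse L. Two such matrices have the
  same Pluecker coordinates pi_kV exactly when they differ by a right factor in SL_k, so g fixes
  pi_kV T iff \<rho>(g) T = T C with det C = 1, i.e. iff (g, A) fixes T for A the transpose of C\<inverse>.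
  This A is unique: its transpose is L \<rho>(g)\<inverse> T, and since det \<rho>(g) = 1 the inverse \<rho>(g)\<inverse> is
  the adjugate of \<rho>(g), so A depends polynomially on g. Hence g \<mapsto> (g, A) is an isomorphism onto
  Stab(T), with the first projection as inverse.\<close>

lemma det_linear_rows_sum_on:
  fixes a :: "'k::finite \<Rightarrow> 'n::finite \<Rightarrow> 'a::comm_ring_1^'k"
  assumes "finite I"
  shows "det (\<chi> i. if i \<in> I then sum (a i) UNIV else c i) =
    (\<Sum>f\<in>{f. \<forall>i. i \<notin> I \<longrightarrow> f i = d}. det (\<chi> i. if i \<in> I then a i (f i) else c i))"
  using assms
proof (induction I arbitrary: c rule: finite_induct)
  case empty
  have "{f::'k\<Rightarrow>'n. \<forall>i. f i = d} = {\<lambda>_. d}" by auto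
  then show ?case by simp
next
  case (insert z I c)
  let ?F = "\<lambda>I. {f::'k\<Rightarrow>'n. \<forall>i. i \<notin> I \<longrightarrow> f i = d}"
  let ?c = "\<lambda>j i. if i = z then a i j else c i"
  have "det (\<chi> i. if i \<in> insert z I then sum (a i) UNIV else c i) =
    det (\<chi> i. if i = z then sum (a i) UNIV else if i \<in> I then sum (a i) UNIV else c i)"
    by (rule arg_cong[where f=det]) (simp add: vec_eq_iff)
  also have "\<dots> = (\<Sum>j\<in>UNIV. det (\<chi> i. if i = z then a i j else if i \<in> I then sum (a i) UNIV else c i))"
    by (rule det_linear_row_sum) simp
  also have "\<dots> = (\<Sum>j\<in>UNIV. det (\<chi> i. if i \<in> I then sum (a i) UNIV else ?c j i))"
    using insert.hyps(2) by (intro sum.cong refl arg_cong[where f=det]) (auto simp: vec_eq_iff)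
  also have "\<dots> = (\<Sum>(j, f)\<in>UNIV \<times> ?F I. det (\<chi> i. if i \<in> I then a i (f i) else ?c j i))"
    by (simp only: insert.IH sum.cartesian_product)
  also have "\<dots> = (\<Sum>f\<in>?F (insert z I). det (\<chi> i. if i \<in> insert z I then a i (f i) else c i))"
    using insert.hyps(2)
    by (intro sum.reindex_bij_witness[where i="\<lambda>h. (h z, h(z := d))" and j="\<lambda>(j, h). h(z := j)"])
       (auto intro!: arg_cong[where f=det] simp: vec_eq_iff)
  finally show ?case .
qed

lemma det_linear_rows_sum_UNIV:
  fixes a :: "'k::finite \<Rightarrow> 'n::finite \<Rightarrow> 'a::comm_ring_1^'k"
  shows "det (\<chi> i. sum (a i) UNIV) = (\<Sum>f\<in>UNIV. det (\<chi> i. a i (f i)))"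
  using det_linear_rows_sum_on[of "UNIV::'k set" a] by simp

lemma cramer_lemma_row:
  fixes A :: "'a::field^'n^'n"
  shows "det (\<chi> i. if i = k then x v* A else A $ i) = x $ k * det A"
proof -
  have "x v* A = (\<Sum>i\<in>UNIV. x $ i *s row i A)"
    by (simp add: vec_eq_iff vector_matrix_mult_def row_def mult.commute)
  moreover have "A $ i = row i A" for i
    by (simp add: row_def)
  ultimately show ?thesis
    by (simp only: cramer_lemma_transpose)
qed

definition adjugate :: "'a::comm_ring_1^'n^'n \<Rightarrow> 'a^'n^'n" where
  "adjugate M = (\<chi> a b. det (\<chi> r c. if c = a then axis b 1 $ r else M $ r $ c))"

lemma adjugate_mult_det_one:
  fixes M :: "'a::field^'n^'n"
  assumes "det M = 1"
  shows "adjugate M ** M = mat 1"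
proof -
  have column: "M *v (\<chi> a. adjugate M $ a $ b) = axis b 1" for b
    using cramer[of M "\<chi> a. adjugate M $ a $ b" "axis b 1"] assms by (simp add: adjugate_def)
  have "M ** adjugate M = mat 1"
  proof (rule iffD2[OF vec_eq_iff], intro allI, rule iffD2[OF vec_eq_iff], intro allI)
    fix i b
    have "(M ** adjugate M) $ i $ b = (M *v (\<chi> a. adjugate M $ a $ b)) $ i"
      by (simp add: matrix_matrix_mult_def matrix_vector_mult_def)
    then show "(M ** adjugate M) $ i $ b = mat 1 $ i $ b"
      by (simp add: column axis_def mat_def)
  qed
  then show ?thesis
    using matrix_left_right_inverse by blast
qed

lemma polys_sum:
  assumes "finite S" "\<And>i. i \<in> S \<Longrightarrow> f i \<in> polys C"
  shows "(\<lambda>x. \<Sum>i\<in>S. f i x) \<in> polys C"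
  using assms
proof (induction S rule: finite_induct)
  case empty
  then show ?case using polys.const[of 0 C] by simp
next
  case (insert a S)
  then show ?case using polys.add[of "f a" C "\<lambda>x. \<Sum>i\<in>S. f i x"] by simp
qed

lemma polys_prod:
  assumes "finite S" "\<And>i. i \<in> S \<Longrightarrow> f i \<in> polys C"
  shows "(\<lambda>x. \<Prod>i\<in>S. f i x) \<in> polys C"
  using assms
proof (induction S rule: finite_induct)
  case empty
  then show ?case using polys.const[of 1 C] by simp
next
  case (insert a S)
  then show ?case using polys.mult[of "f a" C "\<lambda>x. \<Prod>i\<in>S. f i x"] by simp
qed

lemma polys_det:
  fixes F :: "'x \<Rightarrow> 'a::comm_ring_1^'n^'n"
  assumes "\<And>i j. (\<lambda>x. F x $ i $ j) \<in> polys C"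
  shows "(\<lambda>x. det (F x)) \<in> polys C"
  unfolding det_def
  by (intro polys_sum polys_prod polys.mult[OF polys.const] finite assms)

lemma polys_matrix_mult:
  fixes F :: "'x \<Rightarrow> 'a::comm_ring_1^'n^'m" and H :: "'x \<Rightarrow> 'a^'p^'n"
  assumes "\<And>i j. (\<lambda>x. F x $ i $ j) \<in> polys C" "\<And>i j. (\<lambda>x. H x $ i $ j) \<in> polys C"
  shows "(\<lambda>x. (F x ** H x) $ i $ j) \<in> polys C"
  unfolding matrix_matrix_mult_def
  by (simp add: polys_sum polys.mult assms)

lemma polys_mat_coords_entry: "(\<lambda>M. M $ i $ j) \<in> polys mat_coords"
  by (auto simp: mat_coords_def intro: polys.coord)

lemma polys_adjugate: "(\<lambda>M. adjugate M $ a $ b) \<in> polys mat_coords"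
  unfolding adjugate_def vec_lambda_beta
proof (rule polys_det)
  fix r c
  show "(\<lambda>M. (\<chi> r c. if c = a then axis b 1 $ r else M $ r $ c) $ r $ c) \<in> polys mat_coords"
    by (cases "c = a") (simp_all add: polys.const polys_mat_coords_entry)
qed

lemma polys_pullback:
  assumes "regular_map CX CY X f" "p \<in> polys CY"
  shows "\<exists>q\<in>polys CX. \<forall>x\<in>X. p (f x) = q x"
  using assms(2)
proof (induction rule: polys.induct)
  case (const c)
  then show ?case by (auto intro: polys.const)
next
  case (coord c)
  then show ?case using assms(1) by (simp add: regular_map_def)
next
  case (add p1 p2)
  then show ?case by (fastforce intro: polys.add)
next
  case (mult p1 p2)
  then show ?case by (fastforce intro: polys.mult)
qed

lemma regular_map_comp:
  assumes "regular_map CX CY X f" "regular_map CY CZ (f ` X) g"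
  shows "regular_map CX CZ X (g \<circ> f)"
  unfolding regular_map_def
proof
  fix c assume "c \<in> CZ"
  then obtain p where "p \<in> polys CY" "\<forall>y\<in>f ` X. c (g y) = p y"
    using assms(2) by (auto simp: regular_map_def)
  then show "\<exists>q\<in>polys CX. \<forall>x\<in>X. c ((g \<circ> f) x) = q x"
    using polys_pullback[OF assms(1)] by fastforce
qed

lemma regular_map_cong:
  "(\<And>x. x \<in> X \<Longrightarrow> f x = g x) \<Longrightarrow> regular_map CX CY X f = regular_map CX CY X g"
  by (simp add: regular_map_def)

lemma regular_map_subset:
  "regular_map CX CY X f \<Longrightarrow> X' \<subseteq> X \<Longrightarrow> regular_map CX CY X' f"
  unfolding regular_map_def by blast

lemma regular_map_id: "regular_map C C X (\<lambda>x. x)"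
  unfolding regular_map_def by (blast intro: polys.coord)

lemma regular_map_fst: "regular_map (prod_coords CX CY) CX X fst"
  unfolding regular_map_def
proof
  fix c assume "c \<in> CX"
  then have "c \<circ> fst \<in> polys (prod_coords CX CY)"
    by (auto simp: prod_coords_def intro: polys.coord)
  then show "\<exists>p\<in>polys (prod_coords CX CY). \<forall>x\<in>X. c (fst x) = p x"
    by (intro bexI[of _ "c \<circ> fst"]) auto
qed

lemma regular_map_Pair:
  assumes "regular_map C CX X f" "regular_map C CY X g"
  shows "regular_map C (prod_coords CX CY) X (\<lambda>x. (f x, g x))"
  using assms unfolding regular_map_def prod_coords_def by auto

lemma regular_map_det_one:
  fixes f :: "'x \<Rightarrow> 'a::field^'n^'n"
  assumes "\<And>x. x \<in> X \<Longrightarrow> det (f x) = 1"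
    and "\<And>i j. (\<lambda>x. f x $ i $ j) \<in> polys C"
  shows "regular_map C mat_coords X f"
  unfolding regular_map_def mat_coords_def
  using assms by (auto intro: polys.const)

lemma alg_group_iso_graph:
  assumes "regular_map CX CY X \<psi>"
    and "\<And>x y. x \<in> X \<Longrightarrow> y \<in> X \<Longrightarrow> \<psi> (mx x y) = my (\<psi> x) (\<psi> y)"
  shows "alg_group_iso CX (prod_coords CX CY) mx (\<lambda>(g, A) (h, B). (mx g h, my A B))
           X ((\<lambda>x. (x, \<psi> x)) ` X)"
  unfolding alg_group_iso_def
proof (intro exI conjI ballI)
  let ?\<phi> = "\<lambda>x. (x, \<psi> x)"
  show bij: "bij_betw ?\<phi> X (?\<phi> ` X)"
    by (auto simp: bij_betw_def inj_on_def)
  show "?\<phi> (mx x y) = (\<lambda>(g, A) (h, B). (mx g h, my A B)) (?\<phi> x) (?\<phi> y)" if "x \<in> X" "y \<in> X" for x y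
    using assms(2) that by simp
  show "regular_map CX (prod_coords CX CY) X ?\<phi>"
    using regular_map_Pair[OF regular_map_id assms(1)] .
  have "the_inv_into X ?\<phi> y = fst y" if "y \<in> ?\<phi> ` X" for y
    using that the_inv_into_f_f[OF bij_betw_imp_inj_on[OF bij]] by auto
  then show "regular_map (prod_coords CX CY) CX (?\<phi> ` X) (the_inv_into X ?\<phi>)"
    using regular_map_cong[of "?\<phi> ` X" "the_inv_into X ?\<phi>" fst] regular_map_fst by blast
qed

lemma pi_kV_rows: "pi_kV T f = det (\<chi> i. T $ f i)"
  unfolding pi_kV_def by simp

lemma det_rows_matrix_mult:
  fixes M :: "'a::comm_ring_1^'n^'p" and T :: "'a^'k^'n" and f :: "'k \<Rightarrow> 'p"
  shows "det (\<chi> i. (M ** T) $ f i) = (\<Sum>h\<in>UNIV. (\<Prod>i\<in>UNIV. M $ f i $ h i) * pi_kV T h)"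
proof -
  have "(M ** T) $ p = (\<Sum>a\<in>UNIV. M $ p $ a *s T $ a)" for p
    by (simp add: matrix_matrix_mult_def vec_eq_iff)
  then have "det (\<chi> i. (M ** T) $ f i) = det (\<chi> i. \<Sum>a\<in>UNIV. M $ f i $ a *s T $ a)"
    by simp
  also have "\<dots> = (\<Sum>h\<in>UNIV. det (\<chi> i. M $ f i $ h i *s T $ h i))"
    by (rule det_linear_rows_sum_UNIV)
  also have "\<dots> = (\<Sum>h\<in>UNIV. (\<Prod>i\<in>UNIV. M $ f i $ h i) * pi_kV T h)"
    by (simp add: det_rows_mul pi_kV_rows)
  finally show ?thesis .
qed

lemma ext_act_pi_kV: "ext_act M (pi_kV T) = pi_kV (M ** T)"
  by (rule ext) (simp add: ext_act_def det_rows_matrix_mult pi_kV_rows[of "M ** T"])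

lemma pi_kV_matrix_mult_right: "pi_kV (T ** C) h = pi_kV T h * det C"
proof -
  have "(\<chi> i. (T ** C) $ h i) = (\<chi> i. T $ h i) ** C"
    by (simp add: vec_eq_iff matrix_matrix_mult_def)
  then show ?thesis by (simp add: pi_kV_rows det_mul)
qed

lemma pi_kV_nonzero_if_left_invertible:
  fixes T :: "'a::comm_ring_1^'k^'n" and L :: "'a^'n^'k"
  assumes "L ** T = mat 1"
  shows "\<exists>f. pi_kV T f \<noteq> 0"
proof (rule ccontr)
  assume "\<nexists>f. pi_kV T f \<noteq> 0"
  then have "det (\<chi> i. (L ** T) $ i) = 0"
    using det_rows_matrix_mult[of L T id] by simp
  then show False by (simp add: assms)
qed

text \<open>The coefficients come from Cramer's rule for the invertible k-minor on the rows f.\<close>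
lemma matrix_eq_pluecker_mult_minor:
  fixes T :: "'a::field^'k^'n"
  assumes "pi_kV T f \<noteq> 0"
  shows "T = (\<chi> r k. pi_kV T (f(k := r)) / pi_kV T f) ** (\<chi> i. T $ f i)"
proof -
  define P where "P = (\<chi> i. T $ f i)"
  have det_P: "det P = pi_kV T f" by (simp add: P_def pi_kV_rows)
  then obtain P' where P': "P' ** P = mat 1"
    using assms invertible_det_nz[of P] unfolding invertible_def by metis
  have "T $ r = (\<chi> k. pi_kV T (f(k := r)) / pi_kV T f) v* P" for r
  proof -
    define x where "x = T $ r v* P'"
    have row_r: "T $ r = x v* P" by (simp add: x_def vector_matrix_mul_assoc P')
    have "(\<chi> i. T $ (f(k := r)) i) = (\<chi> i. if i = k then x v* P else P $ i)" for k
      unfolding row_r[symmetric] by (simp add: vec_eq_iff P_def)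
    then have "pi_kV T (f(k := r)) = x $ k * pi_kV T f" for k
      by (simp add: pi_kV_rows cramer_lemma_row det_P)
    then have "x = (\<chi> k. pi_kV T (f(k := r)) / pi_kV T f)"
      using assms by (simp add: vec_eq_iff)
    then show ?thesis by (simp add: row_r)
  qed
  moreover have "(A ** P) $ r = A $ r v* P" for A :: "'a^'k^'n" and r
    by (simp add: vec_eq_iff matrix_matrix_mult_def vector_matrix_mult_def mult.commute)
  ultimately show ?thesis
    unfolding P_def[symmetric] by (intro vec_eq_iff[THEN iffD2]) simp
qed

lemma pi_kV_eq_iff_SL_right_mult:
  fixes S T :: "'a::field^'k^'n"
  assumes "pi_kV T f \<noteq> 0"
  shows "pi_kV S = pi_kV T \<longleftrightarrow> (\<exists>C. S = T ** C \<and> det C = 1)"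
proof
  assume eq: "pi_kV S = pi_kV T"
  define N where "N = (\<chi> r k. pi_kV T (f(k := r)) / pi_kV T f)"
  define P where "P = (\<chi> i. T $ f i)"
  define Q where "Q = (\<chi> i. S $ f i)"
  have T: "T = N ** P" and S: "S = N ** Q"
    using matrix_eq_pluecker_mult_minor[of T f] matrix_eq_pluecker_mult_minor[of S f] assms eq
    by (simp_all add: N_def P_def Q_def)
  have det_PQ: "det Q = det P" "det P \<noteq> 0"
    using eq assms by (simp_all add: P_def Q_def flip: pi_kV_rows)
  then obtain P' where P': "P ** P' = mat 1" "P' ** P = mat 1"
    using invertible_det_nz[of P] unfolding invertible_def by metis
  have "T ** P' = N"
    by (metis T P'(1) matrix_mul_assoc matrix_mul_rid)
  then have "S = T ** (P' ** Q)"
    by (simp add: S matrix_mul_assoc)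
  moreover have "det (P' ** Q) = 1"
  proof -
    have "det P' * det P = 1" by (metis P'(2) det_I det_mul)
    then show ?thesis by (simp add: det_mul det_PQ)
  qed
  ultimately show "\<exists>C. S = T ** C \<and> det C = 1" by blast
next
  assume "\<exists>C. S = T ** C \<and> det C = 1"
  then show "pi_kV S = pi_kV T" by (auto simp: pi_kV_matrix_mult_right)
qed

lemma U_set_left_invertible:
  fixes T :: "'a::field^'k^'n"
  assumes "T \<in> U_set"
  shows "\<exists>L. L ** T = mat 1"
proof -
  obtain v where T: "T = (\<Sum>i\<in>UNIV. tensor (v i) (axis i 1))"
    and indep: "\<And>c::'k \<Rightarrow> 'a. (\<Sum>i\<in>UNIV. c i *s v i) = 0 \<Longrightarrow> (\<forall>i. c i = 0)"
    using assms unfolding U_set_def by blast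
  have column: "T $ a $ j = v j $ a" for a j
    by (simp add: T tensor_def axis_def if_distrib cong: if_cong)
  have "x = 0" if "T *v x = 0" for x
  proof -
    have "(\<Sum>i\<in>UNIV. x $ i *s v i) = 0"
      using that by (simp add: vec_eq_iff matrix_vector_mult_def column mult.commute)
    then show "x = 0" using indep by (simp add: vec_eq_iff)
  qed
  then show ?thesis
    using matrix_left_invertible_ker by blast
qed

lemma tensor_act_mult:
  "tensor_act (M ** N) (A ** B) T = tensor_act M A (tensor_act N B T)"
  by (simp add: tensor_act_def matrix_transpose_mul matrix_mul_assoc)

definition sl_factor :: "'a::comm_ring_1^'n^'k \<Rightarrow> 'a^'n^'n \<Rightarrow> 'a^'k^'n \<Rightarrow> 'a^'k^'k" where
  "sl_factor L M T = transpose (L ** adjugate M ** T)"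

lemma polys_sl_factor: "(\<lambda>M. sl_factor L M T $ i $ j) \<in> polys mat_coords"
  unfolding sl_factor_def transpose_def vec_lambda_beta
  by (intro polys_matrix_mult polys_adjugate polys.const)

lemma tensor_act_fixed_imp_eq_sl_factor:
  fixes M :: "'a::field^'n^'n" and L :: "'a^'n^'k"
  assumes "det M = 1" "L ** T = mat 1" "tensor_act M A T = T"
  shows "A = sl_factor L M T"
proof -
  have "adjugate M ** (M ** T ** transpose A) = adjugate M ** T"
    using assms(3) by (simp add: tensor_act_def)
  then have "T ** transpose A = adjugate M ** T"
    by (simp add: matrix_mul_assoc adjugate_mult_det_one assms(1))
  then have "L ** (T ** transpose A) = L ** adjugate M ** T"
    by (simp add: matrix_mul_assoc)
  then have "transpose A = L ** adjugate M ** T"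
    by (simp add: matrix_mul_assoc assms(2))
  then show ?thesis
    unfolding sl_factor_def by (metis transpose_transpose)
qed

lemma tensor_act_fixed_iff:
  fixes M :: "'a::field^'n^'n" and L :: "'a^'n^'k"
  assumes "det M = 1" "L ** T = mat 1"
  shows "det A = 1 \<and> tensor_act M A T = T \<longleftrightarrow>
    ext_act M (pi_kV T) = pi_kV T \<and> A = sl_factor L M T"
proof
  assume A: "det A = 1 \<and> tensor_act M A T = T"
  have "pi_kV (M ** T) = pi_kV (M ** T ** transpose A)"
    using A by (simp add: fun_eq_iff pi_kV_matrix_mult_right)
  also have "\<dots> = pi_kV T"
    using A by (simp add: tensor_act_def)
  finally have "pi_kV (M ** T) = pi_kV T" .
  then show "ext_act M (pi_kV T) = pi_kV T \<and> A = sl_factor L M T"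
    using A tensor_act_fixed_imp_eq_sl_factor[OF assms] by (simp add: ext_act_pi_kV)
next
  assume "ext_act M (pi_kV T) = pi_kV T \<and> A = sl_factor L M T"
  then have stab: "pi_kV (M ** T) = pi_kV T" and A: "A = sl_factor L M T"
    by (simp_all add: ext_act_pi_kV)
  obtain f where "pi_kV T f \<noteq> 0"
    using pi_kV_nonzero_if_left_invertible[OF assms(2)] by blast
  then obtain C where C: "M ** T = T ** C" "det C = 1"
    using stab pi_kV_eq_iff_SL_right_mult by blast
  then obtain C' where C': "C ** C' = mat 1" "C' ** C = mat 1"
    using invertible_det_nz[of C] unfolding invertible_def by auto
  have "tensor_act M (transpose C') T = T"
    by (simp add: tensor_act_def C(1) C'(1) flip: matrix_mul_assoc)
  moreover have "det (transpose C') = 1"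
    using C'(1) C(2) by (metis det_I det_mul det_transpose mult_1)
  ultimately show "det A = 1 \<and> tensor_act M A T = T"
    using tensor_act_fixed_imp_eq_sl_factor[OF assms] A by metis
qed

lemma sl_factor_mult:
  fixes M N :: "'a::field^'n^'n" and L :: "'a^'n^'k"
  assumes "L ** T = mat 1" "det M = 1" "det N = 1"
    and "ext_act M (pi_kV T) = pi_kV T" "ext_act N (pi_kV T) = pi_kV T"
  shows "sl_factor L (M ** N) T = sl_factor L M T ** sl_factor L N T"
proof -
  have "tensor_act M (sl_factor L M T) T = T" "tensor_act N (sl_factor L N T) T = T"
    using tensor_act_fixed_iff[OF _ assms(1)] assms(2-5) by blast+
  then have "tensor_act (M ** N) (sl_factor L M T ** sl_factor L N T) T = T"
    by (simp add: tensor_act_mult)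
  then show ?thesis
    using tensor_act_fixed_imp_eq_sl_factor[OF _ assms(1)] assms(2,3) by (simp add: det_mul)
qed

lemma regular_map_sl_factor:
  fixes L :: "'a::field^'n^'k"
  assumes "L ** T = mat 1" "\<And>M. M \<in> S \<Longrightarrow> det M = 1 \<and> ext_act M (pi_kV T) = pi_kV T"
  shows "regular_map mat_coords mat_coords S (\<lambda>M. sl_factor L M T)"
  using tensor_act_fixed_iff[OF _ assms(1)] assms(2)
  by (intro regular_map_det_one polys_sl_factor) blast

theorem lemma3p2:
  fixes G :: "('a::real_normed_field ^'m^'m) set"
    and \<rho> :: "'a^'m^'m \<Rightarrow> 'a^'n^'n"
    and T :: "'a^'k^'n"
  assumes "lin_alg_group G"
    and "rational_rep G \<rho>"
    and "\<forall>g\<in>G. det (\<rho> g) = 1"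
    and "CARD('k) < CARD('n)"
    and "T \<in> U_set"
  shows "alg_group_iso mat_coords (prod_coords mat_coords mat_coords)
           (\<lambda>g h. g ** h) (\<lambda>(g, A) (h, B). (g ** h, A ** B))
           {g \<in> G. ext_act (\<rho> g) (pi_kV T) = pi_kV T}
           {(g, A). g \<in> G \<and> det A = 1 \<and> tensor_act (\<rho> g) A T = T}"
proof -
  let ?X = "{g \<in> G. ext_act (\<rho> g) (pi_kV T) = pi_kV T}"
  have \<rho>_mult: "\<And>g h. g \<in> G \<Longrightarrow> h \<in> G \<Longrightarrow> \<rho> (g ** h) = \<rho> g ** \<rho> h"
    and \<rho>_regular: "regular_map mat_coords mat_coords G \<rho>"
    using assms(2) unfolding rational_rep_def by blast+
  have det_\<rho>: "\<And>g. g \<in> G \<Longrightarrow> det (\<rho> g) = 1"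
    using assms(3) by blast
  obtain L where L: "L ** T = mat 1"
    using U_set_left_invertible[OF assms(5)] by blast
  let ?\<psi> = "\<lambda>g. sl_factor L (\<rho> g) T"
  have graph: "{(g, A). g \<in> G \<and> det A = 1 \<and> tensor_act (\<rho> g) A T = T} = (\<lambda>g. (g, ?\<psi> g)) ` ?X"
    using tensor_act_fixed_iff[OF det_\<rho> L] by auto
  have hom: "?\<psi> (g ** h) = ?\<psi> g ** ?\<psi> h" if "g \<in> ?X" "h \<in> ?X" for g h
    using sl_factor_mult[OF L] \<rho>_mult det_\<rho> that by simp
  have "regular_map mat_coords mat_coords ?X ((\<lambda>M. sl_factor L M T) \<circ> \<rho>)"
  proof (rule regular_map_comp)
    show "regular_map mat_coords mat_coords ?X \<rho>"
      by (rule regular_map_subset[OF \<rho>_regular]) blast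
    show "regular_map mat_coords mat_coords (\<rho> ` ?X) (\<lambda>M. sl_factor L M T)"
      using det_\<rho> by (intro regular_map_sl_factor[OF L]) blast
  qed
  then have "regular_map mat_coords mat_coords ?X ?\<psi>"
    by (simp add: comp_def)
  then show ?thesis
    unfolding graph using hom
    by (rule alg_group_iso_graph[where mx = "\<lambda>g h. g ** h" and my = "\<lambda>A B. A ** B"])
qed

end
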